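(* Let $k\ge 2$ and $m\ge 1$ be integers, let $x=\zeta_k=e^{2\pi\sqrt{-1}/k}$, and let $H\in \mathrm{BH}(mk,k)$ be such that its first $k$ rows form the $k\times mk$ matrix $F_k\otimes j_m$. Partition these first $k$ rows into the $k$ consecutive $k\times m$ blocks $B_1,\dots,B_k$ (block $B_\ell$ consisting of columns $(\ell-1)m+1,\dots,\ell m$). Then for any choice of elements $c_1,\dots,c_k\in\langle x\rangle$, the matrix $K$ obtained from $H$ by replacing each block $B_\ell$ by $c_\ell B_\ell$ (and leaving all other entries unchanged) is also in $\mathrm{BH}(mk,k)$.
   Context: For $k\ge 1$, $\zeta_k=e^{2\pi\sqrt{-1}/k}$ and $\langle \zeta_k\rangle$ is the set of all $k$-th roots of unity. A complex Hadamard matrix of order $n$ is an $n\times n$ matrix $H$ with all entries of modulus $1$ and $HH^{\ast}=nI_n$. $\mathrm{BH}(n,k)$ denotes the set of $n\times n$ complex Hadamard matrices all of whose entries lie in $\langle\zeta_k\rangle$ (Butson Hadamard matrices). $F_k=[\zeta_k^{(i-1)(j-1)}]_{1\le i,j\le k}$ is the $k\times k$ Fourier matrix, $j_m$ denotes the all-ones row vector of length $m$, and $\otimes$ is the Kronecker product, $A\otimes B=[a_{ij}B]$. *)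

theory Defs
  imports Complex_Main
begin

(* Matrices are rendered as functions nat => nat => complex, indexed from 0;
   an n x n matrix is such a function restricted to indices < n. *)

definition zeta :: "nat \<Rightarrow> complex" where
  "zeta k = cis (2 * pi / real k)"

definition roots_unity :: "nat \<Rightarrow> complex set" where
  "roots_unity k = {zeta k ^ e | e. e < k}"

definition complex_hadamard :: "nat \<Rightarrow> (nat \<Rightarrow> nat \<Rightarrow> complex) \<Rightarrow> bool" where
  "complex_hadamard n H \<longleftrightarrow>
     (\<forall>i<n. \<forall>j<n. norm (H i j) = 1) \<and>
     (\<forall>i<n. \<forall>i'<n. (\<Sum>j<n. H i j * cnj (H i' j)) = (if i = i' then of_nat n else 0))"

definition BH :: "nat \<Rightarrow> nat \<Rightarrow> (nat \<Rightarrow> nat \<Rightarrow> complex) \<Rightarrow> bool" where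
  "BH n k H \<longleftrightarrow> complex_hadamard n H \<and> (\<forall>i<n. \<forall>j<n. H i j \<in> roots_unity k)"

definition fourier :: "nat \<Rightarrow> nat \<Rightarrow> nat \<Rightarrow> complex" where
  "fourier k i j = zeta k ^ (i * j)"

(* Kronecker product F_k \<otimes> j_m, a k x (m k) matrix: entry (i,j) = F_k(i, j div m) *)
definition fourier_kron_ones :: "nat \<Rightarrow> nat \<Rightarrow> nat \<Rightarrow> nat \<Rightarrow> complex" where
  "fourier_kron_ones k m i j = fourier k i (j div m)"

end

theory Submission
  imports Defs
begin

(* Every row of H below the first k is orthogonal to all rows of F_k \<otimes> j_m, i.e. the vector of
   its k block sums is annihilated by F_k; since F_k is invertible, all block sums vanish.
   Hence such a row stays orthogonal to every vector that is constant on the blocks, in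
   particular to the rescaled top rows. Among the top rows, rescaling block l by the
   unimodular c_l multiplies each term of an inner product by |c_l|^2 = 1. *)

lemma zeta_pow: "zeta k ^ d = cis (2 * pi * real d / real k)"
  unfolding zeta_def DeMoivre by (simp add: field_simps)

lemma norm_zeta_pow [simp]: "norm (zeta k ^ d) = 1"
  by (simp add: zeta_pow)

lemma zeta_pow_self:
  assumes "k > 0"
  shows "zeta k ^ k = 1"
  using assms by (simp add: zeta_pow)

lemma zeta_pow_mod:
  assumes "k > 0"
  shows "zeta k ^ (d mod k) = zeta k ^ d"
proof -
  have "zeta k ^ d = zeta k ^ (k * (d div k) + d mod k)"
    by simp
  also have "\<dots> = (zeta k ^ k) ^ (d div k) * zeta k ^ (d mod k)"
    by (simp only: power_add power_mult)
  also have "\<dots> = zeta k ^ (d mod k)"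
    by (simp add: zeta_pow_self[OF assms])
  finally show ?thesis ..
qed

lemma zeta_pow_eq_1_iff:
  assumes "k > 0"
  shows "zeta k ^ d = 1 \<longleftrightarrow> k dvd d"
proof
  assume "zeta k ^ d = 1"
  then have eq: "cis (2 * pi * real (d mod k) / real k) = cis (2 * pi * real 0 / real k)"
    by (simp add: zeta_pow_mod[OF assms] flip: zeta_pow)
  have inj: "inj_on (\<lambda>e. cis (2 * pi * real e / real k)) {..<k}"
    using bij_betw_roots_unity[OF assms] by (simp add: bij_betw_def)
  have "d mod k = 0"
    using inj_onD[OF inj eq] assms by simp
  then show "k dvd d" by auto
next
  assume "k dvd d"
  then show "zeta k ^ d = 1"
    by (auto simp: zeta_pow_self[OF assms] power_mult)
qed

lemma norm_roots_unity: "z \<in> roots_unity k \<Longrightarrow> norm z = 1"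
  by (auto simp: roots_unity_def)

lemma roots_unity_mult:
  assumes "k > 0" and "a \<in> roots_unity k" and "b \<in> roots_unity k"
  shows "a * b \<in> roots_unity k"
proof -
  obtain e f where "a = zeta k ^ e" and "b = zeta k ^ f"
    using assms(2,3) by (auto simp: roots_unity_def)
  then have "a * b = zeta k ^ ((e + f) mod k)"
    by (simp add: zeta_pow_mod[OF assms(1)] power_add)
  then show ?thesis
    using assms(1) by (auto simp: roots_unity_def)
qed

lemma sum_zeta_pow_mult:
  assumes "k > 0"
  shows "(\<Sum>i<k. zeta k ^ (i * d)) = (if k dvd d then of_nat k else 0)"
proof -
  define w where "w = zeta k ^ d"
  have sum_w: "(\<Sum>i<k. zeta k ^ (i * d)) = (\<Sum>i<k. w ^ i)"
    by (simp add: w_def mult.commute flip: power_mult)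
  show ?thesis
  proof (cases "k dvd d")
    case True
    then have "w = 1"
      using zeta_pow_eq_1_iff[OF assms] by (simp add: w_def)
    then show ?thesis
      using True sum_w by simp
  next
    case False
    then have "w \<noteq> 1"
      using zeta_pow_eq_1_iff[OF assms] by (simp add: w_def)
    moreover have "w ^ k = 1"
      using zeta_pow_eq_1_iff[OF assms, of "d * k"] by (simp add: w_def flip: power_mult)
    ultimately show ?thesis
      using False sum_w geometric_sum[of w k] by simp
  qed
qed

lemma dvd_add_diff_iff_eq:
  fixes k l t :: nat
  assumes "l < k" and "t < k"
  shows "k dvd l + (k - t) \<longleftrightarrow> l = t"
proof (cases "t \<le> l")
  case True
  then have "l + (k - t) = (l - t) + k"
    using assms(2) by simp
  then have "k dvd l + (k - t) \<longleftrightarrow> k dvd l - t"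
    by (simp only: dvd_add_triv_right_iff)
  also have "\<dots> \<longleftrightarrow> l = t"
    using assms(1) True nat_dvd_not_less[of "l - t" k] by (cases "t < l") auto
  finally show ?thesis .
next
  case False
  then show ?thesis
    using assms nat_dvd_not_less[of "l + (k - t)" k] by auto
qed

lemma fourier_transform_eq_0_imp_eq_0:
  fixes s :: "nat \<Rightarrow> complex"
  assumes "k > 0" and "\<forall>i<k. (\<Sum>l<k. fourier k i l * s l) = 0" and "t < k"
  shows "s t = 0"
proof -
  (* pair with the conjugate of row t of F_k, using zeta^(-i t) = zeta^(i (k - t)) *)
  have "0 = (\<Sum>i<k. zeta k ^ (i * (k - t)) * (\<Sum>l<k. fourier k i l * s l))"
    using assms(2) by simp
  also have "\<dots> = (\<Sum>i<k. \<Sum>l<k. zeta k ^ (i * (l + (k - t))) * s l)"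
    by (simp add: fourier_def sum_distrib_left distrib_left power_add mult_ac)
  also have "\<dots> = (\<Sum>l<k. (\<Sum>i<k. zeta k ^ (i * (l + (k - t)))) * s l)"
    by (subst sum.swap) (simp add: sum_distrib_right)
  also have "\<dots> = (\<Sum>l<k. if l = t then of_nat k * s l else 0)"
    using assms(3) dvd_add_diff_iff_eq
    by (intro sum.cong) (simp_all add: sum_zeta_pow_mult[OF assms(1)])
  also have "\<dots> = of_nat k * s t"
    using assms(3) by simp
  finally show ?thesis
    using assms(1) by simp
qed

definition block_sum :: "nat \<Rightarrow> (nat \<Rightarrow> 'a::comm_monoid_add) \<Rightarrow> nat \<Rightarrow> 'a" where
  "block_sum m v l = (\<Sum>j\<in>{l * m..<l * m + m}. v j)"

lemma sum_block_constant:
  fixes f v :: "nat \<Rightarrow> 'a::semiring_0"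
  shows "(\<Sum>j<m * k. f (j div m) * v j) = (\<Sum>l<k. f l * block_sum m v l)"
proof -
  have "j div m = l" if "j \<in> {l * m..<l * m + m}" for j l
    using that by (intro div_nat_eqI) (auto simp: mult.commute)
  then have "(\<Sum>j\<in>{l * m..<l * m + m}. f (j div m) * v j) = f l * block_sum m v l" for l
    by (simp add: block_sum_def sum_distrib_left)
  then show ?thesis
    using sum.nat_group[of "\<lambda>j. f (j div m) * v j" m k] by (simp add: mult.commute)
qed

lemma orthogonal_fourier_kron_imp_orthogonal_block_constant:
  fixes v f :: "nat \<Rightarrow> complex"
  assumes "k > 0"
    and "\<forall>i<k. (\<Sum>j<m * k. fourier_kron_ones k m i j * cnj (v j)) = 0"
  shows "(\<Sum>j<m * k. f (j div m) * cnj (v j)) = 0"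
proof -
  have "block_sum m (\<lambda>j. cnj (v j)) l = 0" if "l < k" for l
  proof (rule fourier_transform_eq_0_imp_eq_0[OF assms(1) _ that], intro allI impI)
    fix i assume "i < k"
    then show "(\<Sum>l<k. fourier k i l * block_sum m (\<lambda>j. cnj (v j)) l) = 0"
      using assms(2) sum_block_constant[where f = "fourier k i" and v = "\<lambda>j. cnj (v j)" and m = m and k = k]
      by (simp add: fourier_kron_ones_def)
  qed
  then show ?thesis
    using sum_block_constant[where f = f and v = "\<lambda>j. cnj (v j)" and m = m and k = k] by simp
qed

lemma complex_hadamard_norm:
  "complex_hadamard n H \<Longrightarrow> i < n \<Longrightarrow> j < n \<Longrightarrow> norm (H i j) = 1"
  by (simp add: complex_hadamard_def)

lemma complex_hadamard_inner:
  "complex_hadamard n H \<Longrightarrow> i < n \<Longrightarrow> i' < n \<Longrightarrow>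
    (\<Sum>j<n. H i j * cnj (H i' j)) = (if i = i' then of_nat n else 0)"
  by (simp add: complex_hadamard_def)

lemma sum_mult_cnj_commute:
  "(\<Sum>j<n. A i j * cnj (A i' j)) = cnj (\<Sum>j<n. A i' j * cnj (A i j :: complex))"
  by (simp add: mult.commute)

lemma rescaled_top_row_orthogonal_lower_row:
  assumes "k > 0"
    and H: "complex_hadamard (m * k) H"
    and H_top: "\<forall>i<k. \<forall>j<m * k. H i j = fourier_kron_ones k m i j"
    and "i < k" and "k \<le> i'" and "i' < m * k"
  shows "(\<Sum>j<m * k. c (j div m) * H i j * cnj (H i' j)) = 0"
proof -
  have "\<forall>i''<k. (\<Sum>j<m * k. fourier_kron_ones k m i'' j * cnj (H i' j)) = 0"
  proof (intro allI impI)
    fix i'' assume "i'' < k"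
    then show "(\<Sum>j<m * k. fourier_kron_ones k m i'' j * cnj (H i' j)) = 0"
      using complex_hadamard_inner[OF H, of i'' i'] H_top assms(5,6) by simp
  qed
  then have "(\<Sum>j<m * k. c (j div m) * fourier k i (j div m) * cnj (H i' j)) = 0"
    using orthogonal_fourier_kron_imp_orthogonal_block_constant[OF \<open>k > 0\<close>,
        where f = "\<lambda>l. c l * fourier k i l"] by simp
  then show ?thesis
    using H_top \<open>i < k\<close> by (simp add: fourier_kron_ones_def)
qed

lemma complex_hadamard_rescale_fourier_blocks:
  assumes "k > 0"
    and H: "complex_hadamard (m * k) H"
    and H_top: "\<forall>i<k. \<forall>j<m * k. H i j = fourier_kron_ones k m i j"
    and c: "\<forall>l<k. norm (c l) = 1"
  shows "complex_hadamard (m * k) (\<lambda>i j. if i < k then c (j div m) * H i j else H i j)"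
    (is "complex_hadamard _ ?K")
proof -
  have block_lt: "j div m < k" if "j < m * k" for j
    using that by (simp add: less_mult_imp_div_less mult.commute)
  have cnj_c: "c l * cnj (c l) = 1" if "l < k" for l
    using c that complex_norm_square[of "c l"] by simp
  note top_lower = rescaled_top_row_orthogonal_lower_row[OF \<open>k > 0\<close> H H_top]
  have "(\<Sum>j<m * k. ?K i j * cnj (?K i' j)) = (\<Sum>j<m * k. H i j * cnj (H i' j))"
    if "i < m * k" "i' < m * k" for i i'
  proof -
    consider "i < k" "i' < k" | "k \<le> i" "k \<le> i'" | "i < k" "k \<le> i'" | "k \<le> i" "i' < k"
      by linarith
    then show ?thesis
    proof cases
      case 1
      then show ?thesis
        using cnj_c block_lt by (intro sum.cong) (simp_all add: mult_ac)
    next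
      case 2
      then show ?thesis by simp
    next
      case 3
      then show ?thesis
        using top_lower[of i i'] complex_hadamard_inner[OF H] that by simp
    next
      case 4
      then show ?thesis
        using top_lower[of i' i] complex_hadamard_inner[OF H] that
        by (subst (1 2) sum_mult_cnj_commute) simp
    qed
  qed
  then show ?thesis
    using complex_hadamard_norm[OF H] complex_hadamard_inner[OF H] c block_lt
    by (auto simp: complex_hadamard_def norm_mult)
qed

theorem proposition5p1:
  fixes k m :: nat and H :: "nat \<Rightarrow> nat \<Rightarrow> complex" and c :: "nat \<Rightarrow> complex"
  assumes "k \<ge> 2" and "m \<ge> 1"
    and "BH (m * k) k H"
    and "\<forall>i<k. \<forall>j<m * k. H i j = fourier_kron_ones k m i j"
    and "\<forall>l<k. c l \<in> roots_unity k"
  shows "BH (m * k) k (\<lambda>i j. if i < k then c (j div m) * H i j else H i j)"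
proof -
  have "k > 0"
    using assms(1) by simp
  have H: "complex_hadamard (m * k) H" and H_roots: "\<forall>i<m * k. \<forall>j<m * k. H i j \<in> roots_unity k"
    using assms(3) by (simp_all add: BH_def)
  have c_norm: "\<forall>l<k. norm (c l) = 1"
    using assms(5) norm_roots_unity by blast
  have "complex_hadamard (m * k) (\<lambda>i j. if i < k then c (j div m) * H i j else H i j)"
    using complex_hadamard_rescale_fourier_blocks[OF \<open>k > 0\<close> H assms(4) c_norm] .
  moreover have "c (j div m) * H i j \<in> roots_unity k" if "i < m * k" "j < m * k" for i j
    using that H_roots assms(5) roots_unity_mult[OF \<open>k > 0\<close>]
    by (simp add: less_mult_imp_div_less mult.commute)
  ultimately show ?thesis
    using H_roots by (simp add: BH_def)
qed

end
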